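(* Let $q=2^n$, let $B$ be a $k$-subset of $\mathrm{GF}(q)$ with $k\ge3$, and let $\mathcal B=\mathrm{GA}_1(q)(B)$. Suppose that $\hat f_B(\mu)=\sum_{x\in\mathrm{GF}(q)}(-1)^{\mathrm{Tr}(x^t+\mu^dx)}$ for all $\mu\in\mathrm{GF}(q)$, where $t,d$ are positive integers with $\gcd(td,q-1)=1$. Then $(\mathrm{GF}(q),\mathcal B)$ is a $3$-design if and only if the number $|\{x\in\mathrm{GF}(q):(u^dx+(1+u)^d)^t+x^t+1=0\}|$ is independent of $u\in\mathrm{GF}(q)\setminus\mathrm{GF}(2)$.
   Context: $\mathrm{Tr}$ is the absolute trace $\mathrm{GF}(2^n)\to\mathrm{GF}(2)$. $f_B$ is the characteristic function of $B$ as a Boolean function, and $\hat f(\mu)=\sum_{x\in\mathrm{GF}(2^n)}(-1)^{f(x)+\mathrm{Tr}(\mu x)}$ is the Walsh transform. $\mathrm{GA}_1(q)$ is the group of permutations $x\mapsto ax+b$ of $\mathrm{GF}(q)$ with $a\ne0$; $\mathrm{GA}_1(q)(B)=\{\pi(B):\pi\in\mathrm{GA}_1(q)\}$. A pair $(\mathcal P,\mathcal B)$ with $\mathcal B$ a set of $k$-subsets of $\mathcal P$ is a $3$-design if every $3$-subset of $\mathcal P$ lies in exactly $\lambda$ members of $\mathcal B$ for some constant $\lambda$. *)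

theory Defs
  imports Main
begin

text \<open>Absolute trace GF(2^n) -> GF(2), as the map x |-> sum_{i<n} x^(2^i);
  its values lie in the prime field {0,1}.\<close>
definition abs_trace :: "nat \<Rightarrow> 'a::field \<Rightarrow> 'a" where
  "abs_trace n x = (\<Sum>i<n. x ^ (2 ^ i))"

text \<open>(-1)^y for y in GF(2) = {0,1}, as an integer.\<close>
definition sgn2 :: "'a::field \<Rightarrow> int" where
  "sgn2 y = (if y = 0 then 1 else -1)"

definition char_fun :: "'a set \<Rightarrow> 'a \<Rightarrow> 'b::field" where
  "char_fun B x = (if x \<in> B then 1 else 0)"

definition walsh :: "nat \<Rightarrow> ('a::{field,finite} \<Rightarrow> 'a) \<Rightarrow> 'a \<Rightarrow> int" where
  "walsh n f \<mu> = (\<Sum>x\<in>UNIV. sgn2 (f x + abs_trace n (\<mu> * x)))"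

definition GA1_orbit :: "'a::field set \<Rightarrow> 'a set set" where
  "GA1_orbit B = {(\<lambda>x. a * x + b) ` B | a b. a \<noteq> 0}"

definition is_3_design :: "'a set \<Rightarrow> 'a set set \<Rightarrow> nat \<Rightarrow> bool" where
  "is_3_design P Bs k \<longleftrightarrow>
     (\<forall>b\<in>Bs. b \<subseteq> P \<and> card b = k) \<and>
     (\<exists>lam. \<forall>T. T \<subseteq> P \<longrightarrow> card T = 3 \<longrightarrow> card {b\<in>Bs. T \<subseteq> b} = lam)"

end

theory Submission
  imports Defs "HOL-Library.Cardinality" "HOL-Number_Theory.Number_Theory"
    "HOL-Computational_Algebra.Polynomial"
begin

text \<open>
  Let \<open>q = 2 ^ n\<close>, \<open>F(x) = (-1)^[x \<in> B]\<close>, \<open>G(x) = (-1)^Tr(x^t)\<close> and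
  \<open>M\<^sub>H(a, b) = \<Sum>\<^sub>x\<^sub>,\<^sub>y H(ax + by) H(x) H(y)\<close>. Orthogonality of the additive character gives
  \<open>q M\<^sub>H(a, b) = \<Sum>\<^sub>\<mu> H\<^sup>^(\<mu>) H\<^sup>^(a\<mu>) H\<^sup>^(b\<mu>)\<close>. The hypothesis says \<open>F\<^sup>^(\<mu>) = G\<^sup>^(\<mu>^d)\<close>, and
  \<open>\<mu> \<mapsto> \<mu>^d\<close> is a bijection, so \<open>M\<^sub>F(1 + u, u) = M\<^sub>G((1 + u)^d, u^d)\<close>. Substituting \<open>y = xs\<close>
  shows \<open>M\<^sub>G((1 + u)^d, u^d) = q N(u) - q\<close>, where \<open>N(u)\<close> is the number of solutions of
  \<open>(u^d x + (1 + u)^d)^t + x^t + 1 = 0\<close>. On the other side, expanding \<open>F = 1 - 2 [x \<in> B]\<close>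
  gives \<open>M\<^sub>F(1 + u, u) = q^2 - 6qk + 12k^2 - 8k - 8P(u)\<close>, where \<open>P(u)\<close> counts the pairs
  \<open>(p, r)\<close> of distinct points of \<open>B\<close> with \<open>p + u(r - p) \<in> B\<close>. Such pairs correspond to the affine
  maps carrying \<open>B\<close> onto a block through \<open>{0, 1, u}\<close>, so \<open>P(u)\<close> is \<open>|Stab(B)|\<close> times the
  number of those blocks. Every 3-subset is affinely equivalent to some \<open>{0, 1, u}\<close> with
  \<open>u \<notin> GF(2)\<close>; hence \<open>B\<close> generates a 3-design iff \<open>P\<close>, equivalently \<open>N\<close>, is constant.
\<close>

section \<open>Finite fields\<close>

lemma power_card_minus_one_eq_1:
  fixes x :: "'a::{field,finite}"
  assumes "x \<noteq> 0"
  shows "x ^ (CARD('a) - 1) = 1"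
proof -
  let ?U = "UNIV - {0::'a}"
  have "(\<Prod>y\<in>?U. x * y) = (\<Prod>y\<in>?U. y)"
    by (rule prod.reindex_bij_witness[of _ "\<lambda>y. y / x" "\<lambda>y. x * y"]) (use assms in auto)
  moreover have "(\<Prod>y\<in>?U. x * y) = x ^ card ?U * (\<Prod>y\<in>?U. y)"
    by (simp add: prod.distrib)
  moreover have "(\<Prod>y\<in>?U. y) \<noteq> 0"
    by simp
  ultimately have "x ^ card ?U = 1"
    by simp
  then show ?thesis
    by (simp add: card_Diff_singleton)
qed

lemma power_card_eq_self:
  fixes x :: "'a::{field,finite}"
  shows "x ^ CARD('a) = x"
proof (cases "x = 0")
  case False
  then show ?thesis
    using power_minus_mult[of "CARD('a)" x] power_card_minus_one_eq_1 finite_UNIV_card_ge_0 by fastforce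
qed (simp add: finite_UNIV_card_ge_0)

lemma power_eq_self_if_cong_1:
  fixes x :: "'a::{field,finite}"
  assumes "m > 0" "[m = 1] (mod CARD('a) - 1)"
  shows "x ^ m = x"
proof (cases "x = 0")
  case False
  have "\<exists>j. m = j * (CARD('a) - 1) + 1"
    using cong_le_nat[of 1 m] assms by simp
  then obtain j where "m = (CARD('a) - 1) * j + 1"
    by (auto simp: mult.commute)
  then show ?thesis
    using power_card_minus_one_eq_1[OF False] by (simp add: power_add power_mult)
qed (use assms in simp)

lemma bij_power_if_coprime:
  assumes "e > 0" "coprime e (CARD('a::{field,finite}) - 1)"
  shows "bij (\<lambda>x::'a. x ^ e)"
proof -
  define N where "N = CARD('a) - 1"
  obtain a where "[e * a = 1] (mod N)"
    using cong_solve_coprime_nat[OF assms(2)] unfolding N_def by auto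
  \<comment> \<open>the shift by \<open>N\<close> keeps the exponent positive when \<open>a = 0\<close>\<close>
  then have cong: "[e * (a + N) = 1] (mod N)"
    by (simp add: cong_def distrib_left)
  have "card {0, 1 :: 'a} \<le> CARD('a)"
    by (rule card_mono) simp_all
  then have pos: "e * (a + N) > 0"
    using assms(1) unfolding N_def by simp
  have left_inverse: "(x ^ e) ^ (a + N) = x" for x :: 'a
    unfolding power_mult[symmetric] using power_eq_self_if_cong_1 pos cong N_def by blast
  have "inj (\<lambda>x::'a. x ^ e)"
    by (rule injI) (metis left_inverse)
  then show ?thesis
    by (simp add: bij_def finite_UNIV_inj_surj)
qed

lemma sum_reindex_power:
  assumes "e > 0" "coprime e (CARD('a::{field,finite}) - 1)"
  shows "(\<Sum>x\<in>UNIV. g (x ^ e :: 'a)) = (\<Sum>x\<in>UNIV. g x)"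
  using sum.reindex_bij_betw[OF bij_power_if_coprime[OF assms]] .

lemma sum_reindex_affine:
  fixes g :: "'a::{field,finite} \<Rightarrow> 'b::comm_monoid_add"
  assumes "c \<noteq> 0"
  shows "(\<Sum>x\<in>UNIV. g (c * x + a)) = (\<Sum>x\<in>UNIV. g x)"
  by (rule sum.reindex_bij_witness[of _ "\<lambda>y. (y - a) / c" "\<lambda>x. c * x + a"])
     (use assms in \<open>auto simp: field_simps\<close>)

lemma CHAR_eq_2_if_card_eq_power_2:
  assumes "CARD('a::{field,finite}) = 2 ^ n"
  shows "CHAR('a) = 2"
proof -
  have "CHAR('a) > 0"
    by (simp add: finite_imp_CHAR_pos)
  then have prime: "prime CHAR('a)"
    by (rule prime_CHAR_semidom)
  moreover have "CHAR('a) dvd 2 ^ n"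
    using CHAR_dvd_CARD[where 'a='a] assms by simp
  ultimately have "CHAR('a) dvd 2"
    using prime_dvd_power by blast
  then show ?thesis
    by (rule primes_dvd_imp_eq[OF prime two_is_prime_nat])
qed

section \<open>Third moments of the sign function of a set\<close>

definition third_moment :: "('a::{field,finite} \<Rightarrow> int) \<Rightarrow> 'a \<Rightarrow> 'a \<Rightarrow> int" where
  "third_moment H a b = (\<Sum>x\<in>UNIV. \<Sum>y\<in>UNIV. H (a * x + b * y) * H x * H y)"

definition ratio_pairs :: "'a::field set \<Rightarrow> 'a \<Rightarrow> ('a \<times> 'a) set" where
  "ratio_pairs B u = {(p, r) \<in> B \<times> B. p \<noteq> r \<and> p + u * (r - p) \<in> B}"

lemma third_moment_indicator:
  fixes B :: "'a::{field,finite} set"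
  shows "third_moment (\<lambda>x. of_bool (x \<in> B)) (1 - u) u = int (card (ratio_pairs B u)) + int (card B)"
proof -
  define S where "S = {(x, y) \<in> B \<times> B. (1 - u) * x + u * y \<in> B}"
  have "third_moment (\<lambda>x. of_bool (x \<in> B)) (1 - u) u = (\<Sum>p\<in>UNIV \<times> UNIV. of_bool (p \<in> S))"
    unfolding third_moment_def sum.cartesian_product S_def by (intro sum.cong refl) auto
  also have "\<dots> = int (card S)"
    by (subst sum_of_bool_eq) simp_all
  also have "S = ratio_pairs B u \<union> (\<lambda>x. (x, x)) ` B"
    by (auto simp: S_def ratio_pairs_def algebra_simps)
  also have "card (ratio_pairs B u \<union> (\<lambda>x. (x, x)) ` B) = card (ratio_pairs B u) + card B"
    by (subst card_Un_disjoint) (auto simp: ratio_pairs_def card_image inj_on_def)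
  finally show ?thesis
    by simp
qed

lemma third_moment_sign_indicator:
  fixes B :: "'a::{field,finite} set"
  assumes "u \<noteq> 0" "u \<noteq> 1"
  defines "f \<equiv> \<lambda>x. of_bool (x \<in> B) :: int"
  shows "third_moment (\<lambda>x. 1 - 2 * f x) (1 - u) u =
    int CARD('a) ^ 2 - 6 * int CARD('a) * int (card B) + 12 * int (card B) ^ 2
    - 8 * third_moment f (1 - u) u"
proof -
  define q k where "q = int CARD('a)" and "k = int (card B)"
  let ?U = "UNIV :: 'a set"
  define z where "z x y = (1 - u) * x + u * y" for x y
  have sum_f: "(\<Sum>x\<in>UNIV. f x) = k"
    by (simp add: f_def k_def)
  have row: "(\<Sum>y\<in>UNIV. f (z x y)) = k" for x
    using sum_reindex_affine[OF assms(1), of f "(1 - u) * x"] sum_f by (simp add: z_def add.commute)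
  have column: "(\<Sum>x\<in>UNIV. f (z x y)) = k" for y
    using sum_reindex_affine[of "1 - u" f "u * y"] assms(2) sum_f by (simp add: z_def)
  have expand: "(1 - 2 * f (z x y)) * (1 - 2 * f x) * (1 - 2 * f y) =
      1 - 2 * f (z x y) - 2 * f x - 2 * f y + 4 * (f (z x y) * f x) + 4 * (f (z x y) * f y)
      + 4 * (f x * f y) - 8 * (f (z x y) * f x * f y)" for x y
    by (simp add: algebra_simps)
  have "(\<Sum>x\<in>?U. \<Sum>y\<in>?U. (1 - 2 * f (z x y)) * (1 - 2 * f x) * (1 - 2 * f y)) =
      (\<Sum>x\<in>?U. \<Sum>y\<in>?U. 1) - 2 * (\<Sum>x\<in>?U. \<Sum>y\<in>?U. f (z x y))
      - 2 * (\<Sum>x\<in>?U. \<Sum>y\<in>?U. f x) - 2 * (\<Sum>x\<in>?U. \<Sum>y\<in>?U. f y)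
      + 4 * (\<Sum>x\<in>?U. \<Sum>y\<in>?U. f (z x y) * f x) + 4 * (\<Sum>x\<in>?U. \<Sum>y\<in>?U. f (z x y) * f y)
      + 4 * (\<Sum>x\<in>?U. \<Sum>y\<in>?U. f x * f y) - 8 * (\<Sum>x\<in>?U. \<Sum>y\<in>?U. f (z x y) * f x * f y)"
    unfolding expand by (simp only: sum.distrib sum_subtractf sum_distrib_left)
  also have "\<dots> = q * q - 6 * q * k + 12 * k * k - 8 * (\<Sum>x\<in>?U. \<Sum>y\<in>?U. f (z x y) * f x * f y)"
    by (simp add: q_def row sum_f sum.swap[of "\<lambda>x y. f (z x y) * f y"] column
        flip: sum_distrib_left sum_distrib_right)
  finally show ?thesis
    by (simp add: third_moment_def z_def q_def k_def power2_eq_square)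
qed

section \<open>Blocks through three points\<close>

definition affine_stabilizer :: "'a::field set \<Rightarrow> ('a \<times> 'a) set" where
  "affine_stabilizer B = {(a, b). a \<noteq> 0 \<and> (\<lambda>x. a * x + b) ` B = B}"

lemma card_affine_maps_onto:
  fixes B :: "'a::field set"
  assumes "a\<^sub>0 \<noteq> 0"
  shows "card {(a, b). a \<noteq> 0 \<and> (\<lambda>x. a * x + b) ` B = (\<lambda>x. a\<^sub>0 * x + b\<^sub>0) ` B} =
    card (affine_stabilizer B)"
proof -
  let ?g = "\<lambda>x. a\<^sub>0 * x + b\<^sub>0" and ?g' = "\<lambda>y. (y - b\<^sub>0) / a\<^sub>0"
  have "bij_betw (\<lambda>(c, d). (a\<^sub>0 * c, a\<^sub>0 * d + b\<^sub>0)) (affine_stabilizer B)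
      {(a, b). a \<noteq> 0 \<and> (\<lambda>x. a * x + b) ` B = ?g ` B}"
  proof (rule bij_betw_byWitness[where f' = "\<lambda>(a, b). (a / a\<^sub>0, (b - b\<^sub>0) / a\<^sub>0)"])
    have compose: "(\<lambda>x. a\<^sub>0 * c * x + (a\<^sub>0 * d + b\<^sub>0)) ` B = ?g ` (\<lambda>x. c * x + d) ` B" for c d
      by (simp add: image_image algebra_simps)
    have decompose: "(\<lambda>x. a / a\<^sub>0 * x + (b - b\<^sub>0) / a\<^sub>0) ` B = ?g' ` (\<lambda>x. a * x + b) ` B" for a b
      unfolding image_image using assms by (intro image_cong refl) (simp add: field_simps)
    have "?g' ` ?g ` B = B"
      using assms by (simp add: image_image)
    show "(\<lambda>(a, b). (a / a\<^sub>0, (b - b\<^sub>0) / a\<^sub>0)) ` {(a, b). a \<noteq> 0 \<and> (\<lambda>x. a * x + b) ` B = ?g ` B}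
        \<subseteq> affine_stabilizer B"
    proof clarify
      fix a b
      assume "a \<noteq> 0" "(\<lambda>x. a * x + b) ` B = ?g ` B"
      then have "(\<lambda>x. a / a\<^sub>0 * x + (b - b\<^sub>0) / a\<^sub>0) ` B = B"
        unfolding decompose by (simp only: \<open>?g' ` ?g ` B = B\<close>)
      with assms \<open>a \<noteq> 0\<close> show "(a / a\<^sub>0, (b - b\<^sub>0) / a\<^sub>0) \<in> affine_stabilizer B"
        by (simp add: affine_stabilizer_def)
    qed
    show "(\<lambda>(c, d). (a\<^sub>0 * c, a\<^sub>0 * d + b\<^sub>0)) ` affine_stabilizer B
        \<subseteq> {(a, b). a \<noteq> 0 \<and> (\<lambda>x. a * x + b) ` B = ?g ` B}"
    proof (clarify, unfold affine_stabilizer_def, clarify)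
      fix c d
      assume "c \<noteq> 0" "(\<lambda>x. c * x + d) ` B = B"
      then have "(\<lambda>x. a\<^sub>0 * c * x + (a\<^sub>0 * d + b\<^sub>0)) ` B = ?g ` B"
        unfolding compose by (simp only:)
      with assms \<open>c \<noteq> 0\<close> show "a\<^sub>0 * c \<noteq> 0 \<and> (\<lambda>x. a\<^sub>0 * c * x + (a\<^sub>0 * d + b\<^sub>0)) ` B = ?g ` B"
        by simp
    qed
  qed (use assms in auto)
  then show ?thesis
    by (simp add: bij_betw_same_card)
qed

lemma card_affine_maps_covering:
  fixes B :: "'a::{field,finite} set"
  shows "card {(a, b). a \<noteq> 0 \<and> T \<subseteq> (\<lambda>x. a * x + b) ` B} =
    card (affine_stabilizer B) * card {D \<in> GA1_orbit B. T \<subseteq> D}"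
proof -
  let ?onto = "\<lambda>D. {(a, b). a \<noteq> 0 \<and> (\<lambda>x. a * x + b) ` B = D}"
  have "{(a, b). a \<noteq> 0 \<and> T \<subseteq> (\<lambda>x. a * x + b) ` B} = (\<Union>D\<in>{D \<in> GA1_orbit B. T \<subseteq> D}. ?onto D)"
    by (auto simp: GA1_orbit_def)
  moreover have "card (?onto D) = card (affine_stabilizer B)" if "D \<in> GA1_orbit B" for D
    using that card_affine_maps_onto by (auto simp: GA1_orbit_def)
  ultimately show ?thesis
    by (simp add: card_UN_disjoint disjoint_iff)
qed

lemma mem_affine_image_iff:
  fixes B :: "'a::field set"
  assumes "a \<noteq> 0"
  shows "w \<in> (\<lambda>v. a * v + b) ` B \<longleftrightarrow> (w - b) / a \<in> B"
  using assms by (auto simp: field_simps intro!: image_eqI[where x = "(w - b) / a"])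

lemma ratio_pair_affine_image:
  fixes B :: "'a::field set"
  assumes "x \<noteq> y" "(p, r) \<in> ratio_pairs B ((z - x) / (y - x))"
  defines "a \<equiv> (y - x) / (r - p)"
  shows "a \<noteq> 0" "{x, y, z} \<subseteq> (\<lambda>w. a * w + (x - a * p)) ` B"
proof -
  let ?u = "(z - x) / (y - x)" and ?f = "\<lambda>w. a * w + (x - a * p)"
  have "p \<in> B" "r \<in> B" "p \<noteq> r" "p + ?u * (r - p) \<in> B"
    using assms(2) by (auto simp: ratio_pairs_def)
  then show "a \<noteq> 0"
    using assms(1) by (simp add: a_def)
  have scale: "a * (r - p) = y - x"
    using \<open>p \<noteq> r\<close> by (simp add: a_def)
  have "?f r = x + a * (r - p)" "?f (p + ?u * (r - p)) = x + ?u * (a * (r - p))"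
    by (simp_all add: algebra_simps)
  then have "?f p = x" "?f r = y" "?f (p + ?u * (r - p)) = z"
    using assms(1) unfolding scale by (simp_all add: field_simps)
  then show "{x, y, z} \<subseteq> ?f ` B"
    using \<open>p \<in> B\<close> \<open>r \<in> B\<close> \<open>p + ?u * (r - p) \<in> B\<close> by (metis empty_subsetI image_eqI insert_subset)
qed

lemma card_affine_maps_covering_triple:
  fixes B :: "'a::field set"
  assumes "x \<noteq> y"
  shows "card {(a, b). a \<noteq> 0 \<and> {x, y, z} \<subseteq> (\<lambda>w. a * w + b) ` B} =
    card (ratio_pairs B ((z - x) / (y - x)))"
proof -
  define u where "u = (z - x) / (y - x)"
  have yx: "y - x \<noteq> 0"
    using assms by simp
  have z_preimage: "(z - b) / a = (x - b) / a + u * ((y - b) / a - (x - b) / a)" if "a \<noteq> 0" for a b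
    using that yx by (simp add: u_def field_simps)
  \<comment> \<open>an affine map is determined by the preimages \<open>p, r\<close> of \<open>x, y\<close>\<close>
  let ?preimages = "\<lambda>(a, b). ((x - b) / a, (y - b) / a)"
  let ?map = "\<lambda>(p, r). ((y - x) / (r - p), x - (y - x) / (r - p) * p)"
  have "bij_betw ?preimages {(a, b). a \<noteq> 0 \<and> {x, y, z} \<subseteq> (\<lambda>w. a * w + b) ` B} (ratio_pairs B u)"
  proof (rule bij_betw_byWitness[where f' = ?map])
    show "\<forall>g\<in>{(a, b). a \<noteq> 0 \<and> {x, y, z} \<subseteq> (\<lambda>w. a * w + b) ` B}. ?map (?preimages g) = g"
      using yx by (auto simp: field_simps)
    show "\<forall>pr\<in>ratio_pairs B u. ?preimages (?map pr) = pr"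
      using yx by (auto simp: ratio_pairs_def field_simps)
    show "?preimages ` {(a, b). a \<noteq> 0 \<and> {x, y, z} \<subseteq> (\<lambda>w. a * w + b) ` B} \<subseteq> ratio_pairs B u"
    proof clarify
      fix a b
      assume "a \<noteq> 0" "{x, y, z} \<subseteq> (\<lambda>w. a * w + b) ` B"
      then have "(x - b) / a \<in> B" "(y - b) / a \<in> B" "(z - b) / a \<in> B"
        by (simp_all add: mem_affine_image_iff)
      moreover have "(x - b) / a \<noteq> (y - b) / a"
        using \<open>a \<noteq> 0\<close> assms by (simp add: divide_cancel_right)
      ultimately show "((x - b) / a, (y - b) / a) \<in> ratio_pairs B u"
        using z_preimage[OF \<open>a \<noteq> 0\<close>] by (simp add: ratio_pairs_def)
    qed
    show "?map ` ratio_pairs B u \<subseteq> {(a, b). a \<noteq> 0 \<and> {x, y, z} \<subseteq> (\<lambda>w. a * w + b) ` B}"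
      using ratio_pair_affine_image[OF assms] by (auto simp: u_def)
  qed
  then show ?thesis
    by (simp add: bij_betw_same_card u_def)
qed

lemma card_GA1_orbit_member:
  assumes "D \<in> GA1_orbit B"
  shows "card D = card B"
proof -
  obtain a b where "a \<noteq> 0" "D = (\<lambda>x. a * x + b) ` B"
    using assms by (auto simp: GA1_orbit_def)
  then show ?thesis
    by (simp add: card_image inj_on_def)
qed

lemma is_3_design_GA1_orbit_iff:
  fixes B :: "'a::{field,finite} set"
  shows "is_3_design UNIV (GA1_orbit B) (card B) \<longleftrightarrow>
    (\<exists>c. \<forall>u. u \<notin> {0, 1} \<longrightarrow> card (ratio_pairs B u) = c)"
proof -
  define s where "s = card (affine_stabilizer B)"
  define blocks where "blocks T = card {D \<in> GA1_orbit B. T \<subseteq> D}" for T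
  have "(1, 0) \<in> affine_stabilizer B"
    by (simp add: affine_stabilizer_def)
  then have "s > 0"
    unfolding s_def by (auto simp: card_gt_0_iff)
  have count: "s * blocks {x, y, z} = card (ratio_pairs B ((z - x) / (y - x)))" if "x \<noteq> y" for x y z
    using card_affine_maps_covering[of "{x, y, z}" B] card_affine_maps_covering_triple[OF that]
    by (simp add: s_def blocks_def)
  have "is_3_design UNIV (GA1_orbit B) (card B) \<longleftrightarrow> (\<exists>l. \<forall>T. card T = 3 \<longrightarrow> blocks T = l)"
    by (simp add: is_3_design_def blocks_def card_GA1_orbit_member)
  also have "\<dots> \<longleftrightarrow> (\<exists>c. \<forall>u. u \<notin> {0, 1} \<longrightarrow> card (ratio_pairs B u) = c)"
  proof
    assume "\<exists>l. \<forall>T. card T = 3 \<longrightarrow> blocks T = l"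
    then obtain l where l: "\<And>T. card T = 3 \<Longrightarrow> blocks T = l"
      by blast
    have "card (ratio_pairs B u) = s * l" if "u \<notin> {0, 1}" for u
      using count[of 0 1 u] l[of "{0, 1, u}"] that by auto
    then show "\<exists>c. \<forall>u. u \<notin> {0, 1} \<longrightarrow> card (ratio_pairs B u) = c"
      by blast
  next
    assume "\<exists>c. \<forall>u. u \<notin> {0, 1} \<longrightarrow> card (ratio_pairs B u) = c"
    then obtain c where c: "\<And>u. u \<notin> {0, 1} \<Longrightarrow> card (ratio_pairs B u) = c"
      by blast
    have "blocks T = c div s" if "card T = 3" for T
    proof -
      obtain x y z where T: "T = {x, y, z}" "x \<noteq> y" "y \<noteq> z" "x \<noteq> z"
        using \<open>card T = 3\<close> card_3_iff by metis
      then have "(z - x) / (y - x) \<notin> {0, 1}"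
        by auto
      then have "s * blocks T = c"
        using count[OF T(2)] c[OF \<open>(z - x) / (y - x) \<notin> {0, 1}\<close>] T(1) by simp
      then show ?thesis
        using \<open>s > 0\<close> by auto
    qed
    then show "\<exists>l. \<forall>T. card T = 3 \<longrightarrow> blocks T = l"
      by blast
  qed
  finally show ?thesis .
qed

lemma ex_constant_iff_of_affine_relation:
  fixes f g :: "'a \<Rightarrow> nat" and a b c :: int
  assumes "a \<noteq> 0" "b \<noteq> 0" and relation: "\<And>u. P u \<Longrightarrow> a * int (f u) = c - b * int (g u)"
  shows "(\<exists>m. \<forall>u. P u \<longrightarrow> f u = m) \<longleftrightarrow> (\<exists>m. \<forall>u. P u \<longrightarrow> g u = m)"
proof -
  have "f u = f v \<longleftrightarrow> g u = g v" if "P u" "P v" for u v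
  proof -
    have "a * (int (f u) - int (f v)) = b * (int (g v) - int (g u))"
      using relation[OF that(1)] relation[OF that(2)] by (simp add: algebra_simps)
    then show ?thesis
      using assms(1,2) by auto
  qed
  then show ?thesis
    by metis
qed

section \<open>The additive character and Walsh transforms of \<open>GF(2 ^ n)\<close>\<close>

definition trace_char :: "nat \<Rightarrow> 'a::field \<Rightarrow> int" where
  "trace_char n x = sgn2 (abs_trace n x)"

definition walsh_int :: "nat \<Rightarrow> ('a::{field,finite} \<Rightarrow> int) \<Rightarrow> 'a \<Rightarrow> int" where
  "walsh_int n H \<mu> = (\<Sum>x\<in>UNIV. H x * trace_char n (\<mu> * x))"

context
  fixes n :: nat
  assumes card_UNIV: "CARD('a::{field,finite}) = 2 ^ n"
begin

lemma CHAR_eq_2: "CHAR('a) = 2"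
  using CHAR_eq_2_if_card_eq_power_2[OF card_UNIV] .

lemma add_self_eq_0: "(x::'a) + x = 0"
  by (metis CHAR_eq_2 uminus_CHAR_2 add.right_inverse)

lemma add_eq_0_iff_eq: "((x::'a) + y = 0) = (x = y)"
  by (metis CHAR_eq_2 minus_CHAR_2 eq_iff_diff_eq_0)

lemma power_power_2_add: "((x::'a) + y) ^ (2 ^ i) = x ^ (2 ^ i) + y ^ (2 ^ i)"
  using freshmans_dream' CHAR_eq_2 by (metis two_is_prime_nat)

lemma n_pos: "n > 0"
proof (rule ccontr)
  assume "\<not> n > 0"
  then have "CARD('a) = 1"
    using card_UNIV by simp
  then show False
    using CHAR_eq_2 CHAR_dvd_CARD[where 'a='a] by simp
qed

lemma abs_trace_add: "abs_trace n ((x::'a) + y) = abs_trace n x + abs_trace n y"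
  unfolding abs_trace_def by (simp add: power_power_2_add sum.distrib)

lemma abs_trace_square: "abs_trace n (x::'a) ^ 2 = abs_trace n x"
proof -
  have "abs_trace n x ^ 2 + x = (\<Sum>i<n. (x ^ 2 ^ i) ^ 2) + x ^ 2 ^ 0"
    unfolding abs_trace_def by (subst freshmans_dream_sum) (simp_all add: CHAR_eq_2)
  also have "\<dots> = (\<Sum>i<Suc n. x ^ 2 ^ i)"
    by (subst sum.lessThan_Suc_shift) (simp add: power_mult[symmetric] mult.commute)
  also have "\<dots> = abs_trace n x + x ^ 2 ^ n"
    by (simp add: abs_trace_def)
  also have "x ^ 2 ^ n = x"
    using power_card_eq_self card_UNIV by metis
  finally show ?thesis
    by simp
qed

lemma abs_trace_eq_0_or_1: "abs_trace n (x::'a) = 0 \<or> abs_trace n x = 1"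
proof -
  have "abs_trace n x * (abs_trace n x - 1) = 0"
    using abs_trace_square[of x] by (simp add: power2_eq_square algebra_simps)
  then show ?thesis
    by simp
qed

lemma ex_abs_trace_eq_1: "\<exists>a::'a. abs_trace n a = 1"
proof -
  define p :: "'a poly" where "p = (\<Sum>i<n. monom 1 (2 ^ i))"
  have poly_p: "poly p x = abs_trace n x" for x
    by (simp add: p_def abs_trace_def poly_sum poly_monom)
  have "coeff p 1 = (\<Sum>i<n. if i = 0 then 1 else 0)"
    by (simp add: p_def coeff_sum)
  then have "coeff p 1 = 1"
    using n_pos by simp
  then have "p \<noteq> 0"
    by auto
  have "degree p \<le> 2 ^ (n - 1)"
    unfolding p_def by (rule degree_sum_le) (auto intro!: order.trans[OF degree_monom_le])
  also have "\<dots> < 2 ^ n"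
    using n_pos by simp
  finally have "card {x. poly p x = 0} < CARD('a)"
    using card_poly_roots_bound[OF \<open>p \<noteq> 0\<close>] card_UNIV by linarith
  then have "{x. poly p x = 0} \<noteq> UNIV"
    by auto
  then obtain a where "poly p a \<noteq> 0"
    by blast
  then show ?thesis
    using abs_trace_eq_0_or_1 poly_p by metis
qed

lemma sgn2_add:
  assumes "a = 0 \<or> a = (1::'a)" "b = 0 \<or> b = (1::'a)"
  shows "sgn2 (a + b) = sgn2 a * sgn2 b"
  using assms add_self_eq_0[of 1] by (auto simp: sgn2_def)

lemma trace_char_add: "trace_char n ((x::'a) + y) = trace_char n x * trace_char n y"
  by (simp add: trace_char_def abs_trace_add sgn2_add abs_trace_eq_0_or_1)

lemma trace_char_0: "trace_char n (0::'a) = 1"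
  by (simp add: trace_char_def abs_trace_def sgn2_def power_0_left)

lemma sum_trace_char_mult:
  "(\<Sum>x\<in>UNIV. trace_char n (c * x :: 'a)) = (if c = 0 then 2 ^ n else 0)"
proof (cases "c = 0")
  case True
  then show ?thesis
    using card_UNIV by (simp add: trace_char_0)
next
  case False
  define S where "S = (\<Sum>x\<in>UNIV. trace_char n (x :: 'a))"
  obtain a :: 'a where "abs_trace n a = 1"
    using ex_abs_trace_eq_1 by blast
  then have "trace_char n a = -1"
    by (simp add: trace_char_def sgn2_def)
  have "S = (\<Sum>x\<in>UNIV. trace_char n (1 * x + a))"
    unfolding S_def by (rule sum_reindex_affine[symmetric]) simp
  also have "\<dots> = - S"
    by (simp add: S_def trace_char_add \<open>trace_char n a = -1\<close> sum_negf)
  finally have "S = 0"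
    by simp
  moreover have "(\<Sum>x\<in>UNIV. trace_char n (c * x)) = S"
    unfolding S_def using sum_reindex_affine[OF False, of "trace_char n" 0] by simp
  ultimately show ?thesis
    using False by simp
qed

lemma sum_trace_char_orthogonality:
  "(\<Sum>\<mu>\<in>UNIV. trace_char n (\<mu> * (z + w) :: 'a)) = (if z = w then 2 ^ n else 0)"
  using sum_trace_char_mult[of "z + w"] add_eq_0_iff_eq
  by (simp add: mult.commute)

lemma sum_walsh_mult_trace_char:
  "(\<Sum>\<mu>\<in>UNIV. walsh_int n H \<mu> * trace_char n (\<mu> * w)) = 2 ^ n * H (w::'a)"
proof -
  have "(\<Sum>\<mu>\<in>UNIV. walsh_int n H \<mu> * trace_char n (\<mu> * w)) =
      (\<Sum>z\<in>UNIV. H z * (\<Sum>\<mu>\<in>UNIV. trace_char n (\<mu> * (z + w))))"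
    unfolding walsh_int_def sum_distrib_right sum_distrib_left
    by (subst sum.swap) (simp add: trace_char_add distrib_left mult.assoc)
  also have "\<dots> = 2 ^ n * H w"
    by (simp add: sum_trace_char_orthogonality if_distrib[of "\<lambda>s. _ * s"] cong: if_cong)
  finally show ?thesis .
qed

lemma sum_walsh_triple_product:
  "(\<Sum>\<mu>\<in>UNIV. walsh_int n H \<mu> * walsh_int n H (\<mu> * a) * walsh_int n H (\<mu> * b)) =
    2 ^ n * third_moment H a (b::'a)"
proof -
  have "walsh_int n H (\<mu> * a) * walsh_int n H (\<mu> * b) =
      (\<Sum>x\<in>UNIV. \<Sum>y\<in>UNIV. H x * H y * trace_char n (\<mu> * (a * x + b * y)))" for \<mu>
    unfolding walsh_int_def sum_product
    by (intro sum.cong refl) (simp add: trace_char_add algebra_simps)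
  then have "(\<Sum>\<mu>\<in>UNIV. walsh_int n H \<mu> * walsh_int n H (\<mu> * a) * walsh_int n H (\<mu> * b)) =
      (\<Sum>\<mu>\<in>UNIV. \<Sum>x\<in>UNIV. \<Sum>y\<in>UNIV.
         H x * H y * (walsh_int n H \<mu> * trace_char n (\<mu> * (a * x + b * y))))"
    by (simp add: mult.assoc sum_distrib_left mult.left_commute)
  also have "\<dots> = (\<Sum>x\<in>UNIV. \<Sum>y\<in>UNIV. \<Sum>\<mu>\<in>UNIV.
      H x * H y * (walsh_int n H \<mu> * trace_char n (\<mu> * (a * x + b * y))))"
    by (subst sum.swap) (rule sum.cong[OF refl], rule sum.swap)
  also have "\<dots> = (\<Sum>x\<in>UNIV. \<Sum>y\<in>UNIV.
      H x * H y * (\<Sum>\<mu>\<in>UNIV. walsh_int n H \<mu> * trace_char n (\<mu> * (a * x + b * y))))"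
    by (simp add: sum_distrib_left)
  also have "\<dots> = 2 ^ n * third_moment H a b"
    by (simp add: sum_walsh_mult_trace_char third_moment_def sum_distrib_left mult_ac)
  finally show ?thesis .
qed

lemma sum_trace_char_mult_power:
  assumes "t > 0" "coprime t (CARD('a) - 1)"
  shows "(\<Sum>x\<in>UNIV. trace_char n (c * x ^ t :: 'a)) = (if c = 0 then 2 ^ n else 0)"
  using sum_reindex_power[OF assms, of "\<lambda>z. trace_char n (c * z)"] sum_trace_char_mult
  by simp

lemma sum_trace_char_power_substitute:
  assumes "(x::'a) \<noteq> 0"
  shows "(\<Sum>y\<in>UNIV. trace_char n ((a * x + b * y) ^ t) * trace_char n (x ^ t) * trace_char n (y ^ t)) =
    (\<Sum>s\<in>UNIV. trace_char n (x ^ t * ((b * s + a) ^ t + s ^ t + 1)))"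
proof -
  let ?\<chi> = "trace_char n :: 'a \<Rightarrow> int"
  have "(\<Sum>y\<in>UNIV. ?\<chi> ((a * x + b * y) ^ t) * ?\<chi> (x ^ t) * ?\<chi> (y ^ t)) =
      (\<Sum>s\<in>UNIV. ?\<chi> ((a * x + b * (x * s + 0)) ^ t) * ?\<chi> (x ^ t) * ?\<chi> ((x * s + 0) ^ t))"
    by (rule sum_reindex_affine[OF assms, symmetric])
  also have "\<dots> = (\<Sum>s\<in>UNIV. ?\<chi> (x ^ t * ((b * s + a) ^ t + s ^ t + 1)))"
  proof (rule sum.cong[OF refl])
    fix s
    have factor: "(a * x + b * (x * s + 0)) ^ t = x ^ t * (b * s + a) ^ t"
      by (simp add: algebra_simps flip: power_mult_distrib)
    show "?\<chi> ((a * x + b * (x * s + 0)) ^ t) * ?\<chi> (x ^ t) * ?\<chi> ((x * s + 0) ^ t) =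
        ?\<chi> (x ^ t * ((b * s + a) ^ t + s ^ t + 1))"
      unfolding factor by (simp add: trace_char_add[symmetric] power_mult_distrib distrib_left add_ac)
  qed
  finally show ?thesis .
qed

lemma third_moment_trace_char_power:
  assumes t: "t > 0" "coprime t (CARD('a) - 1)" and b: "b ^ t \<noteq> 1"
  shows "third_moment (\<lambda>x. trace_char n (x ^ t)) a b =
    2 ^ n * int (card {s::'a. (b * s + a) ^ t + s ^ t + 1 = 0}) - 2 ^ n"
proof -
  define c where "c s = (b * s + a) ^ t + s ^ t + 1" for s
  let ?\<chi> = "trace_char n :: 'a \<Rightarrow> int"
  have "(\<Sum>y\<in>UNIV. ?\<chi> ((a * 0 + b * y) ^ t) * ?\<chi> (0 ^ t) * ?\<chi> (y ^ t)) =
      (\<Sum>y\<in>UNIV. ?\<chi> ((b ^ t + 1) * y ^ t))"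
    using t(1) by (simp add: trace_char_add trace_char_0 power_mult_distrib distrib_right zero_power)
  also have "\<dots> = 0"
    using sum_trace_char_mult_power[OF t] b add_eq_0_iff_eq by simp
  finally have row_0: "(\<Sum>y\<in>UNIV. ?\<chi> ((a * 0 + b * y) ^ t) * ?\<chi> (0 ^ t) * ?\<chi> (y ^ t)) = 0" .
  have column: "(\<Sum>x\<in>UNIV - {0}. ?\<chi> (x ^ t * c s)) = (if c s = 0 then 2 ^ n else 0) - 1" for s
    using sum.remove[of UNIV 0 "\<lambda>x. ?\<chi> (x ^ t * c s)"] t(1)
      sum_trace_char_mult_power[OF t, of "c s"]
    by (simp add: mult.commute trace_char_0 zero_power)
  have "third_moment (\<lambda>x. ?\<chi> (x ^ t)) a b =
      (\<Sum>y\<in>UNIV. ?\<chi> ((a * 0 + b * y) ^ t) * ?\<chi> (0 ^ t) * ?\<chi> (y ^ t)) +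
      (\<Sum>x\<in>UNIV - {0}. \<Sum>y\<in>UNIV. ?\<chi> ((a * x + b * y) ^ t) * ?\<chi> (x ^ t) * ?\<chi> (y ^ t))"
    unfolding third_moment_def by (rule sum.remove) simp_all
  also have "\<dots> = (\<Sum>x\<in>UNIV - {0}. \<Sum>s\<in>UNIV. ?\<chi> (x ^ t * c s))"
    unfolding row_0 c_def by (simp, rule sum.cong[OF refl], rule sum_trace_char_power_substitute, simp)
  also have "\<dots> = (\<Sum>s\<in>UNIV. (if c s = 0 then 2 ^ n else 0) - 1)"
    by (subst sum.swap) (simp add: column)
  also have "\<dots> = 2 ^ n * int (card {s. c s = 0}) - 2 ^ n"
    using card_UNIV by (simp add: sum_subtractf sum.If_cases)
  finally show ?thesis
    by (simp add: c_def)
qed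

lemma walsh_char_fun:
  "walsh n (char_fun B) \<mu> = walsh_int n (\<lambda>x. 1 - 2 * of_bool (x \<in> B)) (\<mu> :: 'a)"
  unfolding walsh_def walsh_int_def trace_char_def
proof (intro sum.cong refl)
  fix x :: 'a
  have "sgn2 (char_fun B x + abs_trace n (\<mu> * x)) = sgn2 (char_fun B x :: 'a) * sgn2 (abs_trace n (\<mu> * x))"
    by (rule sgn2_add) (simp_all add: char_fun_def abs_trace_eq_0_or_1)
  then show "sgn2 (char_fun B x + abs_trace n (\<mu> * x)) = (1 - 2 * of_bool (x \<in> B)) * sgn2 (abs_trace n (\<mu> * x))"
    by (simp add: sgn2_def char_fun_def)
qed

lemma sum_sgn2_abs_trace_eq_walsh_int:
  "(\<Sum>x\<in>UNIV. sgn2 (abs_trace n (x ^ t + \<mu> * x))) = walsh_int n (\<lambda>x. trace_char n (x ^ t)) (\<mu> :: 'a)"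
  unfolding walsh_int_def by (simp add: trace_char_def[symmetric] trace_char_add)

lemma card_ratio_pairs_eq:
  fixes B :: "'a set" and t d :: nat
  assumes td: "t > 0" "d > 0" "coprime (t * d) (2 ^ n - 1)"
    and walsh: "\<And>\<mu>. walsh n (char_fun B) \<mu> = (\<Sum>x\<in>UNIV. sgn2 (abs_trace n (x ^ t + \<mu> ^ d * x)))"
    and u: "u \<notin> {0, 1}"
  shows "8 * int (card (ratio_pairs B u)) =
    (2 ^ n) ^ 2 - 6 * 2 ^ n * int (card B) + 12 * int (card B) ^ 2 - 8 * int (card B) + 2 ^ n
    - 2 ^ n * int (card {x. (u ^ d * x + (1 + u) ^ d) ^ t + x ^ t + 1 = 0})"
proof -
  define F :: "'a \<Rightarrow> int" where "F = (\<lambda>x. 1 - 2 * of_bool (x \<in> B))"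
  define G :: "'a \<Rightarrow> int" where "G = (\<lambda>x. trace_char n (x ^ t))"
  have t: "coprime t (CARD('a) - 1)" and d: "coprime d (CARD('a) - 1)"
    using td(3) card_UNIV by simp_all
  have "inj (\<lambda>x::'a. x ^ (d * t))"
    using bij_power_if_coprime[where 'a='a, of "d * t"] td card_UNIV by (simp add: bij_def mult.commute)
  then have "u ^ (d * t) \<noteq> 1 ^ (d * t)"
    using u by (metis injD insertCI)
  then have u_dt: "(u ^ d) ^ t \<noteq> 1"
    by (simp add: power_mult)
  have walsh_F: "walsh_int n F \<mu> = walsh_int n G (\<mu> ^ d)" for \<mu>
    using walsh[of \<mu>] by (simp add: F_def G_def walsh_char_fun sum_sgn2_abs_trace_eq_walsh_int)
  have "2 ^ n * third_moment F (1 + u) u =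
      (\<Sum>\<mu>\<in>UNIV. walsh_int n G (\<mu> ^ d) * walsh_int n G (\<mu> ^ d * (1 + u) ^ d) * walsh_int n G (\<mu> ^ d * u ^ d))"
    by (simp add: sum_walsh_triple_product[symmetric] walsh_F power_mult_distrib)
  also have "\<dots> = (\<Sum>\<mu>\<in>UNIV. walsh_int n G \<mu> * walsh_int n G (\<mu> * (1 + u) ^ d) * walsh_int n G (\<mu> * u ^ d))"
    by (rule sum_reindex_power[OF td(2) d])
  also have "\<dots> = 2 ^ n * third_moment G ((1 + u) ^ d) (u ^ d)"
    by (rule sum_walsh_triple_product)
  finally have "third_moment F (1 + u) u = third_moment G ((1 + u) ^ d) (u ^ d)"
    by simp
  also have "\<dots> = 2 ^ n * int (card {x. (u ^ d * x + (1 + u) ^ d) ^ t + x ^ t + 1 = 0}) - 2 ^ n"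
    unfolding G_def by (rule third_moment_trace_char_power[OF td(1) t u_dt])
  finally show ?thesis
    using third_moment_sign_indicator[of u B] third_moment_indicator[of B u] u card_UNIV
    by (simp add: F_def minus_CHAR_2[OF CHAR_eq_2] power2_eq_square; linarith)
qed

end

theorem theorem10:
  fixes B :: "'a::{field,finite} set" and n k t d :: nat
  assumes q: "card (UNIV :: 'a set) = 2 ^ n"
    and Bk: "card B = k" and k3: "k \<ge> 3"
    and td: "t > 0" "d > 0" "coprime (t * d) (2 ^ n - 1)"
    and walsh: "\<And>\<mu>. walsh n (char_fun B) \<mu> =
                     (\<Sum>x\<in>UNIV. sgn2 (abs_trace n (x ^ t + \<mu> ^ d * x)))"
  shows "is_3_design (UNIV :: 'a set) (GA1_orbit B) k \<longleftrightarrow>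
         (\<exists>c. \<forall>u::'a. u \<notin> {0, 1} \<longrightarrow>
            card {x::'a. (u ^ d * x + (1 + u) ^ d) ^ t + x ^ t + 1 = 0} = c)"
proof -
  have "is_3_design UNIV (GA1_orbit B) k \<longleftrightarrow> (\<exists>c. \<forall>u. u \<notin> {0, 1} \<longrightarrow> card (ratio_pairs B u) = c)"
    using is_3_design_GA1_orbit_iff[of B] Bk by simp
  also have "\<dots> \<longleftrightarrow> (\<exists>c. \<forall>u::'a. u \<notin> {0, 1} \<longrightarrow>
      card {x::'a. (u ^ d * x + (1 + u) ^ d) ^ t + x ^ t + 1 = 0} = c)"
    by (rule ex_constant_iff_of_affine_relation[OF _ _ card_ratio_pairs_eq[OF q td walsh]]) simp_all
  finally show ?thesis .
qed

end
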